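(* Let $(\mu_0^4,\cdot,[-,-])$ be a transposed Poisson algebra structure on the associative algebra $\mu_0^4$. Then it is isomorphic to one of the following pairwise non-isomorphic algebras: $\mathbf{TP}(1,0,0)$, $\mathbf{TP}(0,\alpha,0)$ with $\alpha\in\mathbb{C}$, or $\mathbf{TP}(0,0,1)$.
   Context: $\mu_0^4$ is the complex commutative associative algebra with basis $\{e_1,\dots,e_4\}$ and $e_i\cdot e_j=e_{i+j}$ for $2\leq i+j\leq 4$, other products zero. A transposed Poisson algebra is a triple $(\mathfrak{L},\cdot,[-,-])$ with $(\mathfrak{L},\cdot)$ commutative associative, $(\mathfrak{L},[-,-])$ a Lie algebra, and $2z\cdot[x,y]=[z\cdot x,y]+[x,z\cdot y]$ for all $x,y,z$. For $\alpha_2,\alpha_3,\alpha_4\in\mathbb{C}$, $\mathbf{TP}(\alpha_2,\alpha_3,\alpha_4)$ denotes $\mu_0^4$ with the bracket $[e_i,e_j]=(j-i)\sum_{t=i+j-1}^{4}\alpha_{t-i-j+3}e_t$ for $3\leq i+j\leq 5$, all other brackets of basis elements zero. Isomorphisms preserve both operations. *)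

theory Defs
  imports Complex_Main "HOL-Library.Function_Algebras"
begin

text \<open>The 4-dimensional complex vector space with basis e_1,...,e_4 is modelled as
  the functions nat => complex supported on {1..4}; the coordinate of index k is
  the coefficient of e_k.\<close>

definition V4 :: "(nat \<Rightarrow> complex) set" where
  "V4 = {v. \<forall>k. (k < 1 \<or> 4 < k) \<longrightarrow> v k = 0}"

definition smul :: "complex \<Rightarrow> (nat \<Rightarrow> complex) \<Rightarrow> (nat \<Rightarrow> complex)" where
  "smul c v = (\<lambda>k. c * v k)"

text \<open>Bilinear map on V4 given by structure constants: f i j k is the coefficient of
  e_k in the product of e_i and e_j.\<close>
definition bil :: "(nat \<Rightarrow> nat \<Rightarrow> nat \<Rightarrow> complex) \<Rightarrow> (nat \<Rightarrow> complex) \<Rightarrow> (nat \<Rightarrow> complex) \<Rightarrow> (nat \<Rightarrow> complex)" where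
  "bil f x y = (\<lambda>k. if 1 \<le> k \<and> k \<le> 4
      then (\<Sum>i\<in>{1..4}. \<Sum>j\<in>{1..4}. x i * y j * f i j k) else 0)"

definition mu04 :: "(nat \<Rightarrow> complex) \<Rightarrow> (nat \<Rightarrow> complex) \<Rightarrow> (nat \<Rightarrow> complex)" where
  "mu04 = bil (\<lambda>i j k. if 2 \<le> i + j \<and> i + j \<le> 4 \<and> k = i + j then 1 else 0)"

text \<open>The bracket of TP(a2,a3,a4):
  [e_i,e_j] = (j-i) * sum_{t=i+j-1}^{4} alpha_{t-i-j+3} e_t for 3 <= i+j <= 5.\<close>
definition alph :: "complex \<Rightarrow> complex \<Rightarrow> complex \<Rightarrow> nat \<Rightarrow> complex" where
  "alph a2 a3 a4 m = (if m = 2 then a2 else if m = 3 then a3 else if m = 4 then a4 else 0)"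

definition TPbr :: "complex \<Rightarrow> complex \<Rightarrow> complex \<Rightarrow> (nat \<Rightarrow> complex) \<Rightarrow> (nat \<Rightarrow> complex) \<Rightarrow> (nat \<Rightarrow> complex)" where
  "TPbr a2 a3 a4 = bil (\<lambda>i j k.
      if 3 \<le> i + j \<and> i + j \<le> 5 \<and> i + j - 1 \<le> k \<and> k \<le> 4
      then of_int (int j - int i) * alph a2 a3 a4 (k + 3 - (i + j)) else 0)"

definition is_TP_structure :: "((nat \<Rightarrow> complex) \<Rightarrow> (nat \<Rightarrow> complex) \<Rightarrow> (nat \<Rightarrow> complex)) \<Rightarrow> bool" where
  "is_TP_structure br \<longleftrightarrow>
     (\<forall>x\<in>V4. \<forall>y\<in>V4. br x y \<in> V4) \<and>
     (\<forall>x\<in>V4. \<forall>y\<in>V4. \<forall>z\<in>V4. \<forall>c. br (x + smul c y) z = br x z + smul c (br y z)) \<and>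
     (\<forall>x\<in>V4. \<forall>y\<in>V4. \<forall>z\<in>V4. \<forall>c. br z (x + smul c y) = br z x + smul c (br z y)) \<and>
     (\<forall>x\<in>V4. br x x = 0) \<and>
     (\<forall>x\<in>V4. \<forall>y\<in>V4. \<forall>z\<in>V4. br x (br y z) + br y (br z x) + br z (br x y) = 0) \<and>
     (\<forall>x\<in>V4. \<forall>y\<in>V4. \<forall>z\<in>V4.
        smul 2 (mu04 z (br x y)) = br (mu04 z x) y + br x (mu04 z y))"

definition TP_iso :: "((nat \<Rightarrow> complex) \<Rightarrow> (nat \<Rightarrow> complex) \<Rightarrow> (nat \<Rightarrow> complex)) \<Rightarrow>
    ((nat \<Rightarrow> complex) \<Rightarrow> (nat \<Rightarrow> complex) \<Rightarrow> (nat \<Rightarrow> complex)) \<Rightarrow> bool" where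
  "TP_iso br1 br2 \<longleftrightarrow> (\<exists>\<phi>. bij_betw \<phi> V4 V4 \<and>
     (\<forall>x\<in>V4. \<forall>y\<in>V4. \<forall>c. \<phi> (x + smul c y) = \<phi> x + smul c (\<phi> y)) \<and>
     (\<forall>x\<in>V4. \<forall>y\<in>V4. \<phi> (mu04 x y) = mu04 (\<phi> x) (\<phi> y)) \<and>
     (\<forall>x\<in>V4. \<forall>y\<in>V4. \<phi> (br1 x y) = br2 (\<phi> x) (\<phi> y)))"

end

theory Submission
  imports Defs
begin

(* The instances of 2 z[x,y] = [zx,y] + [x,zy] with z in {e1, e2} and x, y basis
   vectors express all [e_i,e_j] through [e1,e2] = sum_k b_k e_k and force b_1 = 0, so the
   bracket is TP(b_2,b_3,b_4).
   The automorphism of mu_0^4 sending e1 to p e1 + q e2 + r e3 (p nonzero) moves the parameters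
   to one of (1,0,0), (0,alpha,0), (0,0,1). Conversely, an isomorphism TP(a) -> TP(b) sends e1
   to some P with P_1 nonzero and e_k to P^k; comparing its image of [e1,e2] with [P,P^2] gives
   a_2 = P_1 b_2, then a_3 = b_3 if a_2 = 0, and b_4 = P_1 a_4 if also a_3 = 0, which separates
   the normal forms. *)

section \<open>Linear algebra on V4\<close>

definition basis_vec :: "nat \<Rightarrow> nat \<Rightarrow> complex" where
  "basis_vec i = (\<lambda>k. if k = i then 1 else 0)"

lemma sum_atLeastAtMost_1_4: "(\<Sum>i\<in>{1..4::nat}. f i) = f 1 + f 2 + f 3 + f 4"
proof -
  have "{1..4::nat} = {1, 2, 3, 4}" by auto
  then show ?thesis by (simp add: add.assoc)
qed

lemma index_cases:
  obtains "k = 1" | "k = 2" | "k = (3::nat)" | "k = 4"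
    | "k \<noteq> 1" "k \<noteq> 2" "k \<noteq> 3" "k \<noteq> 4" "\<not> (1 \<le> k \<and> k \<le> 4)"
  by linarith

lemma V4_iff: "v \<in> V4 \<longleftrightarrow> (\<forall>k. \<not> (1 \<le> k \<and> k \<le> 4) \<longrightarrow> v k = 0)"
  unfolding V4_def by (simp add: not_le less_Suc_eq_le)

lemma V4_outside: "v \<in> V4 \<Longrightarrow> \<not> (1 \<le> k \<and> k \<le> 4) \<Longrightarrow> v k = 0"
  by (simp add: V4_iff)

lemma V4_zero [simp]: "0 \<in> V4"
  by (simp add: V4_def)

lemma V4_add: "x \<in> V4 \<Longrightarrow> y \<in> V4 \<Longrightarrow> x + y \<in> V4"
  by (simp add: V4_def)

lemma V4_smul: "y \<in> V4 \<Longrightarrow> smul c y \<in> V4"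
  by (simp add: V4_def smul_def)

lemma V4_sum: "(\<And>i. i \<in> I \<Longrightarrow> v i \<in> V4) \<Longrightarrow> (\<Sum>i\<in>I. v i) \<in> V4"
  by (induction I rule: infinite_finite_induct) (auto intro: V4_add)

lemma basis_vec_V4: "1 \<le> i \<Longrightarrow> i \<le> 4 \<Longrightarrow> basis_vec i \<in> V4"
  by (auto simp: V4_iff basis_vec_def)

lemma smul_one [simp]: "smul 1 v = v"
  by (simp add: smul_def)

lemma V4_expansion:
  assumes "u \<in> V4"
  shows "u = (\<Sum>i\<in>{1..4}. smul (u i) (basis_vec i))"
proof
  fix k
  show "u k = (\<Sum>i\<in>{1..4}. smul (u i) (basis_vec i)) k"
    using V4_outside[OF assms, of k] unfolding sum_atLeastAtMost_1_4
    by (cases k rule: index_cases) (auto simp: smul_def basis_vec_def)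
qed

definition V4_linear :: "((nat \<Rightarrow> complex) \<Rightarrow> nat \<Rightarrow> complex) \<Rightarrow> bool" where
  "V4_linear L \<longleftrightarrow> (\<forall>x\<in>V4. \<forall>y\<in>V4. \<forall>c. L (x + smul c y) = L x + smul c (L y))"

lemma V4_linear_zero:
  assumes "V4_linear L"
  shows "L 0 = 0"
proof -
  have "L (0 + smul 1 0) = L 0 + smul 1 (L 0)"
    using assms V4_zero unfolding V4_linear_def by blast
  then show ?thesis by simp
qed

lemma V4_linear_sum:
  assumes lin: "V4_linear L" and "finite I" and "\<And>i. i \<in> I \<Longrightarrow> v i \<in> V4"
  shows "L (\<Sum>i\<in>I. smul (c i) (v i)) = (\<Sum>i\<in>I. smul (c i) (L (v i)))"
  using assms(2,3)
proof (induction I rule: finite_induct)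
  case empty
  then show ?case using V4_linear_zero[OF lin] by (simp only: sum.empty)
next
  case (insert j I)
  have IH: "L (\<Sum>i\<in>I. smul (c i) (v i)) = (\<Sum>i\<in>I. smul (c i) (L (v i)))"
    using insert.IH insert.prems by blast
  have "(\<Sum>i\<in>I. smul (c i) (v i)) \<in> V4"
    using insert.prems by (auto intro: V4_sum V4_smul)
  then have "L ((\<Sum>i\<in>I. smul (c i) (v i)) + smul (c j) (v j))
      = L (\<Sum>i\<in>I. smul (c i) (v i)) + smul (c j) (L (v j))"
    using lin insert.prems unfolding V4_linear_def by blast
  then show ?case
    using IH by (simp only: sum.insert[OF insert.hyps] add.commute)
qed

lemma V4_linear_expansion:
  assumes "V4_linear L" and "u \<in> V4"
  shows "L u = (\<Sum>i\<in>{1..4}. smul (u i) (L (basis_vec i)))"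
proof -
  have "L u = L (\<Sum>i\<in>{1..4}. smul (u i) (basis_vec i))"
    using V4_expansion[OF assms(2)] by (rule arg_cong)
  also have "\<dots> = (\<Sum>i\<in>{1..4}. smul (u i) (L (basis_vec i)))"
    using assms(1) by (rule V4_linear_sum) (auto intro: basis_vec_V4)
  finally show ?thesis .
qed

lemma V4_linear_eqI:
  assumes "V4_linear L" "V4_linear M" "\<And>i. 1 \<le> i \<Longrightarrow> i \<le> 4 \<Longrightarrow> L (basis_vec i) = M (basis_vec i)"
    and "u \<in> V4"
  shows "L u = M u"
  using V4_linear_expansion[OF assms(1,4)] V4_linear_expansion[OF assms(2,4)] assms(3) by simp

definition V4_bilinear :: "((nat \<Rightarrow> complex) \<Rightarrow> (nat \<Rightarrow> complex) \<Rightarrow> nat \<Rightarrow> complex) \<Rightarrow> bool" where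
  "V4_bilinear br \<longleftrightarrow> (\<forall>z\<in>V4. V4_linear (\<lambda>x. br x z) \<and> V4_linear (br z))"

lemma V4_bilinear_eqI:
  assumes bl: "V4_bilinear br" and bl': "V4_bilinear br'"
    and basis: "\<And>i j. 1 \<le> i \<Longrightarrow> i \<le> 4 \<Longrightarrow> 1 \<le> j \<Longrightarrow> j \<le> 4 \<Longrightarrow>
      br (basis_vec i) (basis_vec j) = br' (basis_vec i) (basis_vec j)"
    and x: "x \<in> V4" and y: "y \<in> V4"
  shows "br x y = br' x y"
proof (rule V4_linear_eqI[where L = "\<lambda>x. br x y" and M = "\<lambda>x. br' x y"])
  show "V4_linear (\<lambda>x. br x y)" "V4_linear (\<lambda>x. br' x y)"
    using bl bl' y unfolding V4_bilinear_def by blast+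
  fix i :: nat assume i: "1 \<le> i" "i \<le> 4"
  then have "basis_vec i \<in> V4" by (rule basis_vec_V4)
  then have lin: "V4_linear (br (basis_vec i))" "V4_linear (br' (basis_vec i))"
    using bl bl' unfolding V4_bilinear_def by blast+
  show "br (basis_vec i) y = br' (basis_vec i) y"
    by (rule V4_linear_eqI[OF lin]) (use basis i y in simp_all)
qed (rule x)

lemma bil_V4_bilinear: "V4_bilinear (bil f)"
  unfolding V4_bilinear_def V4_linear_def bil_def
  by (simp add: fun_eq_iff smul_def sum_distrib_left sum.distrib distrib_left distrib_right mult_ac)

lemma V4_bilinear_antisym:
  assumes bl: "V4_bilinear br" and alt: "\<And>x. x \<in> V4 \<Longrightarrow> br x x = 0"
    and x: "x \<in> V4" and y: "y \<in> V4"
  shows "br y x = - br x y"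
proof -
  have xy: "x + smul 1 y \<in> V4" using x y by (simp add: V4_add)
  have left: "br (x + smul 1 y) w = br x w + smul 1 (br y w)" if "w \<in> V4" for w
    using bl x y that unfolding V4_bilinear_def V4_linear_def by blast
  have right: "br w (x + smul 1 y) = br w x + smul 1 (br w y)" if "w \<in> V4" for w
    using bl x y that unfolding V4_bilinear_def V4_linear_def by blast
  have "0 = br (x + smul 1 y) (x + smul 1 y)" using alt xy by simp
  also have "\<dots> = br x y + br y x"
    unfolding left[OF xy] right[OF x] right[OF y] using alt x y by simp
  finally show ?thesis by (simp add: eq_neg_iff_add_eq_0 add.commute)
qed

section \<open>Transposed Poisson brackets on mu_0^4\<close>

lemma mu04_apply:
  "mu04 u v k = (if k = 2 then u 1 * v 1 else if k = 3 then u 1 * v 2 + u 2 * v 1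
    else if k = 4 then u 1 * v 3 + u 2 * v 2 + u 3 * v 1 else 0)"
  unfolding mu04_def bil_def sum_atLeastAtMost_1_4 by (cases k rule: index_cases) auto

lemma TPbr_apply:
  "TPbr a2 a3 a4 u v k = (if k = 2 then a2 * (u 1 * v 2 - u 2 * v 1)
    else if k = 3 then a3 * (u 1 * v 2 - u 2 * v 1) + 2 * a2 * (u 1 * v 3 - u 3 * v 1)
    else if k = 4 then a4 * (u 1 * v 2 - u 2 * v 1) + 2 * a3 * (u 1 * v 3 - u 3 * v 1)
      + 3 * a2 * (u 1 * v 4 - u 4 * v 1) + a2 * (u 2 * v 3 - u 3 * v 2) else 0)"
  unfolding TPbr_def bil_def sum_atLeastAtMost_1_4
  by (cases k rule: index_cases) (auto simp: alph_def algebra_simps)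

lemma TPbr_V4: "TPbr a2 a3 a4 x y \<in> V4"
  by (simp add: V4_iff TPbr_apply)

lemma mu04_basis_vec_mult:
  "mu04 (basis_vec 1) (basis_vec 1) = basis_vec 2"
  "mu04 (basis_vec 1) (basis_vec 2) = basis_vec 3"
  "mu04 (basis_vec 1) (basis_vec 3) = basis_vec 4"
  "mu04 (basis_vec 1) (basis_vec 4) = 0"
  "mu04 (basis_vec 2) (basis_vec 1) = basis_vec 3"
  "mu04 (basis_vec 2) (basis_vec 2) = basis_vec 4"
  by (simp_all add: fun_eq_iff mu04_apply basis_vec_def)

lemma TPbr_V4_bilinear: "V4_bilinear (TPbr a2 a3 a4)"
  unfolding TPbr_def by (rule bil_V4_bilinear)

lemma TPbr_antisym: "TPbr a2 a3 a4 y x = - TPbr a2 a3 a4 x y"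
  by (simp add: fun_eq_iff TPbr_apply algebra_simps)

lemma TPbr_self: "TPbr a2 a3 a4 x x = 0"
  by (simp add: fun_eq_iff TPbr_apply)

lemma basis_brackets_eq_TPbr:
  fixes b12 b13 b14 b23 b24 b34 :: "nat \<Rightarrow> complex"
  defines "T \<equiv> TPbr (b12 2) (b12 3) (b12 4)"
  assumes b12: "b12 \<in> V4"
    and eq13: "b13 = smul 2 (mu04 (basis_vec 1) b12)"
    and eq23_14: "b23 + b14 = smul 2 (mu04 (basis_vec 1) b13)"
    and eq14_23: "b14 - b23 = smul 2 (mu04 (basis_vec 2) b12)"
    and eq24: "b24 = smul 2 (mu04 (basis_vec 1) b14)"
    and eq24': "b24 = smul 2 (mu04 (basis_vec 1) b23)"
    and eq34: "b34 = smul 2 (mu04 (basis_vec 1) b24)"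
  shows "b12 = T (basis_vec 1) (basis_vec 2)" "b13 = T (basis_vec 1) (basis_vec 3)"
    "b14 = T (basis_vec 1) (basis_vec 4)" "b23 = T (basis_vec 2) (basis_vec 3)"
    "b24 = T (basis_vec 2) (basis_vec 4)" "b34 = T (basis_vec 3) (basis_vec 4)"
proof -
  note coord = mu04_apply basis_vec_def smul_def
  have c13: "b13 k = 2 * mu04 (basis_vec 1) b12 k"
    and c23_14: "b23 k + b14 k = 2 * mu04 (basis_vec 1) b13 k"
    and c14_23: "b14 k - b23 k = 2 * mu04 (basis_vec 2) b12 k"
    and c24: "b24 k = 2 * mu04 (basis_vec 1) b14 k"
    and c24': "b24 k = 2 * mu04 (basis_vec 1) b23 k" for k
    using fun_cong[OF eq13, of k] fun_cong[OF eq23_14, of k] fun_cong[OF eq14_23, of k]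
      fun_cong[OF eq24, of k] fun_cong[OF eq24', of k]
    by (simp_all add: smul_def)
  have c14: "b14 k = mu04 (basis_vec 1) b13 k + mu04 (basis_vec 2) b12 k"
    and c23: "b23 k = mu04 (basis_vec 1) b13 k - mu04 (basis_vec 2) b12 k" for k
    using c23_14[of k] c14_23[of k] by algebra+
  \<comment> \<open>computing the coefficient of e4 in b24 in two ways gives 6 b12 1 = 2 b12 1\<close>
  have a1: "b12 1 = 0"
    using c24[of 4] c24'[of 4] c14[of 3] c23[of 3] c13[of 2] by (simp add: coord)
  show "b12 = T (basis_vec 1) (basis_vec 2)"
  proof
    fix k show "b12 k = T (basis_vec 1) (basis_vec 2) k"
      using a1 V4_outside[OF b12, of k] by (cases k rule: index_cases) (auto simp: T_def TPbr_apply coord)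
  qed
  show "b13 = T (basis_vec 1) (basis_vec 3)"
  proof
    fix k show "b13 k = T (basis_vec 1) (basis_vec 3) k"
      using a1 V4_outside[OF b12] c13[of k] by (cases k rule: index_cases) (auto simp: T_def TPbr_apply coord)
  qed
  show "b14 = T (basis_vec 1) (basis_vec 4)"
  proof
    fix k show "b14 k = T (basis_vec 1) (basis_vec 4) k"
      using a1 V4_outside[OF b12] c14[of k] c13 by (cases k rule: index_cases) (auto simp: T_def TPbr_apply coord)
  qed
  show "b23 = T (basis_vec 2) (basis_vec 3)"
  proof
    fix k show "b23 k = T (basis_vec 2) (basis_vec 3) k"
      using a1 V4_outside[OF b12] c23[of k] c13 by (cases k rule: index_cases) (auto simp: T_def TPbr_apply coord)
  qed
  have b24: "b24 = 0"
  proof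
    fix k show "b24 k = 0 k"
      using a1 V4_outside[OF b12] c24'[of k] c23 c13 by (cases k rule: index_cases) (auto simp: coord)
  qed
  then show "b24 = T (basis_vec 2) (basis_vec 4)"
    by (simp add: fun_eq_iff T_def TPbr_apply basis_vec_def)
  show "b34 = T (basis_vec 3) (basis_vec 4)"
    using eq34 b24 by (simp add: fun_eq_iff T_def TPbr_apply coord)
qed

lemma TP_structure_closed: "is_TP_structure br \<Longrightarrow> x \<in> V4 \<Longrightarrow> y \<in> V4 \<Longrightarrow> br x y \<in> V4"
  unfolding is_TP_structure_def by blast

lemma TP_structure_self: "is_TP_structure br \<Longrightarrow> x \<in> V4 \<Longrightarrow> br x x = 0"
  unfolding is_TP_structure_def by blast

lemma TP_structure_compat:
  "is_TP_structure br \<Longrightarrow> x \<in> V4 \<Longrightarrow> y \<in> V4 \<Longrightarrow> z \<in> V4 \<Longrightarrow>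
    smul 2 (mu04 z (br x y)) = br (mu04 z x) y + br x (mu04 z y)"
  unfolding is_TP_structure_def by blast

lemma TP_structure_V4_bilinear: "is_TP_structure br \<Longrightarrow> V4_bilinear br"
  unfolding is_TP_structure_def V4_bilinear_def V4_linear_def by blast

lemma TP_structure_antisym:
  assumes "is_TP_structure br" "x \<in> V4" "y \<in> V4"
  shows "br y x = - br x y"
  using V4_bilinear_antisym TP_structure_V4_bilinear TP_structure_self assms by blast

lemma TP_structure_basis_identities:
  assumes TP: "is_TP_structure br"
  defines "B \<equiv> \<lambda>i j. br (basis_vec i) (basis_vec j)"
  shows "B 1 3 = smul 2 (mu04 (basis_vec 1) (B 1 2))"
    and "B 2 3 + B 1 4 = smul 2 (mu04 (basis_vec 1) (B 1 3))"
    and "B 1 4 - B 2 3 = smul 2 (mu04 (basis_vec 2) (B 1 2))"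
    and "B 2 4 = smul 2 (mu04 (basis_vec 1) (B 1 4))"
    and "B 2 4 = smul 2 (mu04 (basis_vec 1) (B 2 3))"
    and "B 3 4 = smul 2 (mu04 (basis_vec 1) (B 2 4))"
proof -
  have compat: "smul 2 (mu04 (basis_vec a) (B b c))
      = br (mu04 (basis_vec a) (basis_vec b)) (basis_vec c) + br (basis_vec b) (mu04 (basis_vec a) (basis_vec c))"
    if "1 \<le> a" "a \<le> 4" "1 \<le> b" "b \<le> 4" "1 \<le> c" "c \<le> 4" for a b c
    using TP_structure_compat[OF TP] basis_vec_V4 that unfolding B_def by blast
  have self: "br (basis_vec i) (basis_vec i) = 0" if "1 \<le> i" "i \<le> 4" for i
    using TP_structure_self[OF TP] basis_vec_V4[OF that] by blast
  have zero: "br (basis_vec i) 0 = 0" if "1 \<le> i" "i \<le> 4" for i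
  proof (rule V4_linear_zero)
    show "V4_linear (br (basis_vec i))"
      using TP_structure_V4_bilinear[OF TP] basis_vec_V4[OF that] unfolding V4_bilinear_def by blast
  qed
  have B32: "br (basis_vec 3) (basis_vec 2) = - B 2 3"
    unfolding B_def by (rule TP_structure_antisym[OF TP]) (simp_all add: basis_vec_V4)
  show "B 1 3 = smul 2 (mu04 (basis_vec 1) (B 1 2))"
    using compat[of 1 1 2] self[of 2] unfolding mu04_basis_vec_mult B_def by simp
  show "B 2 3 + B 1 4 = smul 2 (mu04 (basis_vec 1) (B 1 3))"
    using compat[of 1 1 3] unfolding mu04_basis_vec_mult B_def by simp
  show "B 1 4 - B 2 3 = smul 2 (mu04 (basis_vec 2) (B 1 2))"
    using compat[of 2 1 2] B32 unfolding mu04_basis_vec_mult B_def by simp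
  show "B 2 4 = smul 2 (mu04 (basis_vec 1) (B 1 4))"
    using compat[of 1 1 4] zero[of 1] unfolding mu04_basis_vec_mult B_def by simp
  show "B 2 4 = smul 2 (mu04 (basis_vec 1) (B 2 3))"
    using compat[of 1 2 3] self[of 3] unfolding mu04_basis_vec_mult B_def by simp
  show "B 3 4 = smul 2 (mu04 (basis_vec 1) (B 2 4))"
    using compat[of 1 2 4] zero[of 2] unfolding mu04_basis_vec_mult B_def by simp
qed

lemma TP_structure_eq_TPbr:
  assumes TP: "is_TP_structure br" and x: "x \<in> V4" and y: "y \<in> V4"
  defines "b \<equiv> br (basis_vec 1) (basis_vec 2)"
  shows "br x y = TPbr (b 2) (b 3) (b 4) x y"
proof -
  define T where "T = TPbr (b 2) (b 3) (b 4)"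
  have "b \<in> V4"
    unfolding b_def by (simp add: TP_structure_closed[OF TP] basis_vec_V4)
  note brackets = basis_brackets_eq_TPbr[OF this TP_structure_basis_identities[OF TP, folded b_def],
      folded T_def, unfolded b_def]
  have upper: "br (basis_vec i) (basis_vec j) = T (basis_vec i) (basis_vec j)"
    if "1 \<le> i" "i < j" "j \<le> 4" for i j
  proof -
    have "(i = 1 \<and> j = 2) \<or> (i = 1 \<and> j = 3) \<or> (i = 1 \<and> j = 4) \<or> (i = 2 \<and> j = 3)
        \<or> (i = 2 \<and> j = 4) \<or> (i = 3 \<and> j = 4)"
      using that by linarith
    then show ?thesis
      using brackets by auto
  qed
  have "br x y = T x y"
  proof (rule V4_bilinear_eqI[OF TP_structure_V4_bilinear[OF TP] _ _ x y])
    show "V4_bilinear T" unfolding T_def by (rule TPbr_V4_bilinear)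
    fix i j :: nat assume i: "1 \<le> i" "i \<le> 4" and j: "1 \<le> j" "j \<le> 4"
    consider "i < j" | "i = j" | "j < i" by linarith
    then show "br (basis_vec i) (basis_vec j) = T (basis_vec i) (basis_vec j)"
    proof cases
      case 1
      then show ?thesis using upper i j by blast
    next
      case 2
      then show ?thesis
        using TP_structure_self[OF TP] basis_vec_V4[OF i] by (simp add: T_def TPbr_self)
    next
      case 3
      have "br (basis_vec i) (basis_vec j) = - br (basis_vec j) (basis_vec i)"
        using TP_structure_antisym[OF TP] basis_vec_V4 i j by blast
      also have "\<dots> = - T (basis_vec j) (basis_vec i)"
        using upper[of j i] 3 i j by simp
      also have "\<dots> = T (basis_vec i) (basis_vec j)"
        unfolding T_def by (rule TPbr_antisym[symmetric])
      finally show ?thesis .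
    qed
  qed
  then show ?thesis unfolding T_def .
qed

section \<open>Isomorphisms between the algebras TP\<close>

(* The automorphism of mu_0^4 with e1 |-> P = p e1 + q e2 + r e3; it sends e_k to P^k. *)
definition mu04_aut :: "complex \<Rightarrow> complex \<Rightarrow> complex \<Rightarrow> (nat \<Rightarrow> complex) \<Rightarrow> nat \<Rightarrow> complex" where
  "mu04_aut p q r v = (\<lambda>k. if k = 1 then p * v 1
     else if k = 2 then q * v 1 + p^2 * v 2
     else if k = 3 then r * v 1 + 2*p*q * v 2 + p^3 * v 3
     else if k = 4 then (q^2 + 2*p*r) * v 2 + 3*p^2*q * v 3 + p^4 * v 4 else 0)"

lemma mu04_aut_V4: "mu04_aut p q r v \<in> V4"
  by (simp add: V4_iff mu04_aut_def)

lemma mu04_aut_linear: "mu04_aut p q r (x + smul c y) = mu04_aut p q r x + smul c (mu04_aut p q r y)"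
  by (simp add: fun_eq_iff mu04_aut_def smul_def algebra_simps)

lemma mu04_aut_mult: "mu04_aut p q r (mu04 x y) = mu04 (mu04_aut p q r x) (mu04_aut p q r y)"
  by (simp add: fun_eq_iff mu04_aut_def mu04_apply algebra_simps power2_eq_square power3_eq_cube power4_eq_xxxx)

lemma mu04_aut_inj_on:
  assumes "p \<noteq> 0"
  shows "inj_on (mu04_aut p q r) V4"
proof (rule inj_onI)
  fix x y assume x: "x \<in> V4" and y: "y \<in> V4" and eq: "mu04_aut p q r x = mu04_aut p q r y"
  have coord: "mu04_aut p q r x k = mu04_aut p q r y k" for k using eq by simp
  from coord[of 1] assms have 1: "x 1 = y 1" by (simp add: mu04_aut_def)
  from coord[of 2] assms 1 have 2: "x 2 = y 2" by (simp add: mu04_aut_def)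
  from coord[of 3] assms 1 2 have 3: "x 3 = y 3" by (simp add: mu04_aut_def)
  from coord[of 4] assms 1 2 3 have 4: "x 4 = y 4" by (simp add: mu04_aut_def)
  show "x = y"
  proof
    fix k show "x k = y k"
      using 1 2 3 4 V4_outside[OF x, of k] V4_outside[OF y, of k] by (cases k rule: index_cases) auto
  qed
qed

lemma mu04_aut_image:
  assumes "p \<noteq> 0"
  shows "mu04_aut p q r ` V4 = V4"
proof
  show "mu04_aut p q r ` V4 \<subseteq> V4" using mu04_aut_V4 by auto
  show "V4 \<subseteq> mu04_aut p q r ` V4"
  proof
    fix w assume w: "w \<in> V4"
    define v1 where "v1 = w 1 / p"
    define v2 where "v2 = (w 2 - q * v1) / p^2"
    define v3 where "v3 = (w 3 - r * v1 - 2*p*q*v2) / p^3"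
    define v4 where "v4 = (w 4 - (q^2 + 2*p*r) * v2 - 3*p^2*q*v3) / p^4"
    define v where "v = (\<lambda>k::nat. if k = 1 then v1 else if k = 2 then v2 else if k = 3 then v3
      else if k = 4 then v4 else 0)"
    have "v \<in> V4" by (simp add: V4_iff v_def)
    moreover have "mu04_aut p q r v = w"
    proof
      fix k show "mu04_aut p q r v k = w k"
        using V4_outside[OF w, of k] assms
        by (cases k rule: index_cases) (simp_all add: mu04_aut_def v_def v1_def v2_def v3_def v4_def field_simps)
    qed
    ultimately show "w \<in> mu04_aut p q r ` V4" by blast
  qed
qed

(* The three conditions on the parameters say that the automorphism maps the a-bracket [e1,e2]
   to the b-bracket of the images of e1 and e2. *)
lemma mu04_aut_TPbr:
  assumes p: "p \<noteq> 0" and h2: "a2 = p * b2" and h3: "p * a3 = 2 * q * b2 + p * b3"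
    and h4: "p^2 * a4 + q * a3 = 3 * r * b2 + 2 * q * b3 + p * b4"
  shows "mu04_aut p q r (TPbr a2 a3 a4 x y) = TPbr b2 b3 b4 (mu04_aut p q r x) (mu04_aut p q r y)"
proof -
  have a3: "a3 = (2 * q * b2 + p * b3) / p" using h3 p by (simp add: field_simps)
  have a4: "a4 = (3 * r * b2 + 2 * q * b3 + p * b4 - q * a3) / p^2" using h4 p by (simp add: field_simps)
  show ?thesis
  proof
    fix k
    show "mu04_aut p q r (TPbr a2 a3 a4 x y) k = TPbr b2 b3 b4 (mu04_aut p q r x) (mu04_aut p q r y) k"
      unfolding a4 unfolding a3 h2 using p
      by (cases k rule: index_cases)
        (simp_all add: mu04_aut_def TPbr_apply field_simps, simp_all add: algebra_simps eval_nat_numeral)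
  qed
qed

lemma TP_iso_TPbr_by_aut:
  assumes "p \<noteq> 0" "a2 = p * b2" "p * a3 = 2 * q * b2 + p * b3"
    "p^2 * a4 + q * a3 = 3 * r * b2 + 2 * q * b3 + p * b4"
  shows "TP_iso (TPbr a2 a3 a4) (TPbr b2 b3 b4)"
  unfolding TP_iso_def bij_betw_def
  using mu04_aut_inj_on[OF assms(1)] mu04_aut_image[OF assms(1)] mu04_aut_linear mu04_aut_mult
    mu04_aut_TPbr[OF assms]
  by blast

lemma TPbr_normal_form:
  "TP_iso (TPbr a2 a3 a4) (TPbr 1 0 0) \<or> (\<exists>\<alpha>. TP_iso (TPbr a2 a3 a4) (TPbr 0 \<alpha> 0))
    \<or> TP_iso (TPbr a2 a3 a4) (TPbr 0 0 1)"
proof -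
  consider "a2 \<noteq> 0" | "a2 = 0" "a3 \<noteq> 0" | "a2 = 0" "a3 = 0" "a4 \<noteq> 0" | "a2 = 0" "a3 = 0" "a4 = 0"
    by blast
  then show ?thesis
  proof cases
    case 1
    have "TP_iso (TPbr a2 a3 a4) (TPbr 1 0 0)"
      by (rule TP_iso_TPbr_by_aut[where p = a2 and q = "a2 * a3 / 2" and r = "(a2 * a3^2 / 2 + a2^2 * a4) / 3"])
        (use 1 in \<open>simp_all add: field_simps power2_eq_square\<close>)
    then show ?thesis by blast
  next
    case 2
    have "TP_iso (TPbr a2 a3 a4) (TPbr 0 a3 0)"
      by (rule TP_iso_TPbr_by_aut[where p = 1 and q = "a4 / a3" and r = 0])
        (use 2 in \<open>simp_all add: field_simps\<close>)
    then show ?thesis by blast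
  next
    case 3
    have "TP_iso (TPbr a2 a3 a4) (TPbr 0 0 1)"
      by (rule TP_iso_TPbr_by_aut[where p = "1 / a4" and q = 0 and r = 0])
        (use 3 in \<open>simp_all add: field_simps power2_eq_square\<close>)
    then show ?thesis by blast
  next
    case 4
    have "TP_iso (TPbr a2 a3 a4) (TPbr 0 0 0)"
      by (rule TP_iso_TPbr_by_aut[where p = 1 and q = 0 and r = 0]) (use 4 in simp_all)
    then show ?thesis by blast
  qed
qed

lemma TP_iso_TPbr_invariants:
  assumes "TP_iso (TPbr a2 a3 a4) (TPbr b2 b3 b4)"
  obtains p where "p \<noteq> 0" "a2 = p * b2" "a2 = 0 \<Longrightarrow> a3 = b3" "a2 = 0 \<Longrightarrow> a3 = 0 \<Longrightarrow> b4 = p * a4"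
proof -
  obtain \<phi> where bij: "bij_betw \<phi> V4 V4"
    and lin: "V4_linear \<phi>"
    and mult: "\<And>x y. x \<in> V4 \<Longrightarrow> y \<in> V4 \<Longrightarrow> \<phi> (mu04 x y) = mu04 (\<phi> x) (\<phi> y)"
    and br: "\<And>x y. x \<in> V4 \<Longrightarrow> y \<in> V4 \<Longrightarrow> \<phi> (TPbr a2 a3 a4 x y) = TPbr b2 b3 b4 (\<phi> x) (\<phi> y)"
    using assms unfolding TP_iso_def V4_linear_def by blast
  define P where "P = \<phi> (basis_vec 1)"
  have e: "basis_vec 1 \<in> V4" "basis_vec 2 \<in> V4" "basis_vec 3 \<in> V4" "basis_vec 4 \<in> V4"
    by (simp_all add: basis_vec_V4)
  have P2: "\<phi> (basis_vec 2) = mu04 P P"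
    using mult[OF e(1) e(1)] unfolding mu04_basis_vec_mult P_def .
  have P3: "\<phi> (basis_vec 3) = mu04 P (mu04 P P)"
    using mult[OF e(1) e(2)] unfolding mu04_basis_vec_mult P2 P_def .
  have P4: "\<phi> (basis_vec 4) = mu04 P (mu04 P (mu04 P P))"
    using mult[OF e(1) e(3)] unfolding mu04_basis_vec_mult P3 P_def .
  have "TPbr b2 b3 b4 P (mu04 P P) = \<phi> (TPbr a2 a3 a4 (basis_vec 1) (basis_vec 2))"
    using br[OF e(1) e(2)] unfolding P2 P_def ..
  also have "\<dots> = (\<Sum>i\<in>{1..4}. smul (TPbr a2 a3 a4 (basis_vec 1) (basis_vec 2) i) (\<phi> (basis_vec i)))"
    using lin TPbr_V4 by (rule V4_linear_expansion)
  finally have key: "TPbr b2 b3 b4 P (mu04 P P) k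
      = a2 * mu04 P P k + a3 * mu04 P (mu04 P P) k + a4 * mu04 P (mu04 P (mu04 P P)) k" for k
    unfolding sum_atLeastAtMost_1_4 P2 P3 P4 by (simp add: TPbr_apply basis_vec_def smul_def)
  have P1: "P 1 \<noteq> 0"
  proof
    assume "P 1 = 0"
    then have "\<phi> (basis_vec 3) = \<phi> 0"
      unfolding P3 V4_linear_zero[OF lin] by (simp add: fun_eq_iff mu04_apply)
    then have "basis_vec 3 = 0"
      using bij e(3) V4_zero unfolding bij_betw_def inj_on_def by blast
    then have "basis_vec 3 3 = (0 :: nat \<Rightarrow> complex) 3" by (rule fun_cong)
    then show False by (simp add: basis_vec_def)
  qed
  moreover have a2: "a2 = P 1 * b2"
    using key[of 2] P1 by (auto simp: TPbr_apply mu04_apply algebra_simps)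
  moreover have a3: "a3 = b3" if "a2 = 0"
    using key[of 3] that a2 P1 by (auto simp: TPbr_apply mu04_apply algebra_simps)
  moreover have "b4 = P 1 * a4" if "a2 = 0" "a3 = 0"
    using key[of 4] that a2 a3 P1 by (auto simp: TPbr_apply mu04_apply algebra_simps)
  ultimately show ?thesis using that by blast
qed

lemma TP_iso_cong:
  assumes "\<And>x y. x \<in> V4 \<Longrightarrow> y \<in> V4 \<Longrightarrow> br x y = br' x y"
  shows "TP_iso br br2 \<longleftrightarrow> TP_iso br' br2"
  unfolding TP_iso_def using assms by (simp cong: ball_cong)

theorem mainTheorem4:
  shows "(\<forall>br. is_TP_structure br \<longrightarrow>
            TP_iso br (TPbr 1 0 0) \<or> (\<exists>\<alpha>. TP_iso br (TPbr 0 \<alpha> 0)) \<or> TP_iso br (TPbr 0 0 1))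
       \<and> (\<forall>\<alpha>. \<not> TP_iso (TPbr 1 0 0) (TPbr 0 \<alpha> 0))
       \<and> \<not> TP_iso (TPbr 1 0 0) (TPbr 0 0 1)
       \<and> (\<forall>\<alpha>. \<not> TP_iso (TPbr 0 \<alpha> 0) (TPbr 0 0 1))
       \<and> (\<forall>\<alpha> \<beta>. \<alpha> \<noteq> \<beta> \<longrightarrow> \<not> TP_iso (TPbr 0 \<alpha> 0) (TPbr 0 \<beta> 0))"
proof (intro conjI allI impI notI)
  fix br assume TP: "is_TP_structure br"
  define b where "b = br (basis_vec 1) (basis_vec 2)"
  have "TP_iso br br2 \<longleftrightarrow> TP_iso (TPbr (b 2) (b 3) (b 4)) br2" for br2
    unfolding b_def by (rule TP_iso_cong) (rule TP_structure_eq_TPbr[OF TP])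
  then show "TP_iso br (TPbr 1 0 0) \<or> (\<exists>\<alpha>. TP_iso br (TPbr 0 \<alpha> 0)) \<or> TP_iso br (TPbr 0 0 1)"
    using TPbr_normal_form by simp
qed (auto elim: TP_iso_TPbr_invariants)

end
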